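(* Let $A\subset\mathbb{N}$. Suppose there exist a Følner sequence $\Phi$ in $\mathbb{N}$ and a non-principal ultrafilter $\mathfrak{p}$ on $\mathbb{N}$ such that $\mathsf{d}_\Phi\big((A-n)\cap(A-\mathfrak{p})\big)$ exists for all $n\in\mathbb{N}$ and $$\lim_{n\to\mathfrak{p}}\mathsf{d}_\Phi\big((A-n)\cap(A-\mathfrak{p})\big)>0.$$ Then there exist infinite sets $B,C\subset\mathbb{N}$ such that $B+C\subset A$.
   Context: A Følner sequence in $\mathbb{N}$ is a sequence $\Phi\colon N\mapsto\Phi_N$ of finite non-empty subsets of $\mathbb{N}$ with $|(\Phi_N+m)\triangle\Phi_N|/|\Phi_N|\to0$ for all $m\in\mathbb{N}$. For $E\subset\mathbb{N}$, $\mathsf{d}_\Phi(E)=\lim_{N\to\infty}|E\cap\Phi_N|/|\Phi_N|$ when this limit exists. For $n\in\mathbb{N}$, $A-n=\{m\in\mathbb{N}: m+n\in A\}$, and for an ultrafilter $\mathfrak{p}$ on $\mathbb{N}$, $A-\mathfrak{p}=\{n\in\mathbb{N}: A-n\in\mathfrak{p}\}$. For a bounded function $a\colon\mathbb{N}\to\mathbb{R}$, $\lim_{n\to\mathfrak{p}}a(n)$ denotes the unique $x$ such that $\{n: |a(n)-x|<\epsilon\}\in\mathfrak{p}$ for every $\epsilon>0$. *)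

theory Defs
  imports Complex_Main
begin

text \<open>Natural numbers are modelled by the type nat (including 0).\<close>

definition folner :: "(nat \<Rightarrow> nat set) \<Rightarrow> bool" where
  "folner \<Phi> \<longleftrightarrow>
     (\<forall>N. finite (\<Phi> N) \<and> \<Phi> N \<noteq> {}) \<and>
     (\<forall>m. (\<lambda>N. real (card ((((+) m) ` \<Phi> N - \<Phi> N) \<union> (\<Phi> N - ((+) m) ` \<Phi> N)))
                 / real (card (\<Phi> N))) \<longlonglongrightarrow> 0)"

definition density_ratio :: "(nat \<Rightarrow> nat set) \<Rightarrow> nat set \<Rightarrow> nat \<Rightarrow> real" where
  "density_ratio \<Phi> E N = real (card (E \<inter> \<Phi> N)) / real (card (\<Phi> N))"

definition density_exists :: "(nat \<Rightarrow> nat set) \<Rightarrow> nat set \<Rightarrow> bool" where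
  "density_exists \<Phi> E \<longleftrightarrow> convergent (density_ratio \<Phi> E)"

definition density :: "(nat \<Rightarrow> nat set) \<Rightarrow> nat set \<Rightarrow> real" where
  "density \<Phi> E = lim (density_ratio \<Phi> E)"

definition ultrafilter :: "'a filter \<Rightarrow> bool" where
  "ultrafilter F \<longleftrightarrow> F \<noteq> bot \<and> (\<forall>P. eventually P F \<or> eventually (\<lambda>x. \<not> P x) F)"

definition nonprincipal :: "'a filter \<Rightarrow> bool" where
  "nonprincipal F \<longleftrightarrow> (\<forall>a. \<not> eventually (\<lambda>x. x = a) F)"

definition shift_set :: "nat set \<Rightarrow> nat \<Rightarrow> nat set" where
  "shift_set A n = {m. m + n \<in> A}"

definition shift_uf :: "nat set \<Rightarrow> nat filter \<Rightarrow> nat set" where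
  "shift_uf A p = {n. eventually (\<lambda>x. x \<in> shift_set A n) p}"

end

theory Submission
  imports Defs "HOL-Analysis.Elementary_Topology" "HOL-Analysis.Convex"
begin

text \<open>
  Write \<open>\<mu>(X)\<close> for the \<open>p\<close>-limit over \<open>N\<close> of \<open>|X \<inter> \<Phi>\<^sub>N| / |\<Phi>\<^sub>N|\<close> and \<open>g(D)\<close> for the
  \<open>p\<close>-limit over \<open>n\<close> of \<open>\<mu>(D \<inter> (A - n))\<close>. The key step is that \<open>g(D) = \<alpha> > 0\<close> implies
  \<open>g(D \<inter> (A - c)) > 0\<close> for \<open>p\<close>-many \<open>c\<close>: otherwise one finds arbitrarily many \<open>c\<close> whose sets
  \<open>D \<inter> (A - c)\<close> have mean at least \<open>\<alpha>/2\<close> while their pairwise intersections have mean at most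
  \<open>\<alpha>\<^sup>2/8\<close>, which the Cauchy-Schwarz inequality forbids.

  Starting from \<open>D = A - p\<close>, which has \<open>g(D) > 0\<close> by hypothesis, one builds \<open>B\<close> and \<open>C\<close> one
  element at a time: \<open>c\<close> is taken among the \<open>p\<close>-many good candidates that also satisfy
  \<open>b + c \<in> A\<close> for the finitely many \<open>b\<close> chosen so far (possible because \<open>B \<subseteq> A - p\<close>), and
  \<open>b\<close> is taken from \<open>D \<inter> (A - c)\<close>, which has positive mean and is therefore infinite.
\<close>

lemma ultrafilter_eventually_or_not:
  assumes "ultrafilter F"
  shows "eventually P F \<or> eventually (\<lambda>x. \<not> P x) F"
  using assms unfolding ultrafilter_def by blast

lemma ultrafilter_ne_bot: "ultrafilter F \<Longrightarrow> F \<noteq> bot"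
  by (simp add: ultrafilter_def)

lemma nonprincipal_ultrafilter_le_cofinite:
  assumes uf: "ultrafilter F" and np: "nonprincipal F"
  shows "F \<le> cofinite"
proof -
  have notin_finite: "eventually (\<lambda>x. x \<notin> S) F" if "finite S" for S
    using that
  proof (induction S rule: finite_induct)
    case empty
    show ?case by simp
  next
    case (insert a S)
    have "eventually (\<lambda>x. x \<noteq> a) F"
      using np uf unfolding nonprincipal_def ultrafilter_def by blast
    with insert.IH show ?case by eventually_elim simp
  qed
  show ?thesis
  proof (rule filter_leI)
    fix P :: "'a \<Rightarrow> bool" assume "eventually P cofinite"
    then have "eventually (\<lambda>x. x \<notin> {x. \<not> P x}) F"
      by (intro notin_finite) (simp add: eventually_cofinite)
    then show "eventually P F" by simp
  qed
qed

lemma ultrafilter_tendsto_Lim: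
  fixes f :: "'a \<Rightarrow> 'b :: t2_space"
  assumes uf: "ultrafilter F" and K: "compact K" and f: "eventually (\<lambda>x. f x \<in> K) F"
  shows "(f \<longlongrightarrow> Lim F f) F"
proof -
  have "filtermap f F \<noteq> bot"
    using uf by (simp add: ultrafilter_def filtermap_bot_iff)
  moreover have "eventually (\<lambda>y. y \<in> K) (filtermap f F)"
    using f by (simp add: eventually_filtermap)
  ultimately obtain l where l: "inf (nhds l) (filtermap f F) \<noteq> bot"
    using K by (auto simp: compact_filter)
  have "(f \<longlongrightarrow> l) F"
  proof (rule topological_tendstoI)
    fix S assume "open S" "l \<in> S"
    then have "eventually (\<lambda>y. y \<in> S) (nhds l)" by (rule eventually_nhds_in_open)
    show "eventually (\<lambda>x. f x \<in> S) F"
    proof (rule ccontr)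
      assume "\<not> eventually (\<lambda>x. f x \<in> S) F"
      then have "eventually (\<lambda>y. y \<notin> S) (filtermap f F)"
        using ultrafilter_eventually_or_not[OF uf] by (auto simp: eventually_filtermap)
      with \<open>eventually (\<lambda>y. y \<in> S) (nhds l)\<close> have "eventually (\<lambda>_. False) (inf (nhds l) (filtermap f F))"
        unfolding eventually_inf by blast
      with l show False by (simp add: eventually_False)
    qed
  qed
  then show ?thesis
    using uf by (simp add: ultrafilter_def tendsto_Lim)
qed

lemma filter_obtain_pairwise_family:
  assumes "F \<noteq> bot" and "F \<le> cofinite" and "eventually P F"
    and R: "\<And>i. P i \<Longrightarrow> eventually (R i) F" and sym: "\<And>i j. R i j \<Longrightarrow> R j i"
  obtains S where "finite S" "card S = k" "\<forall>i\<in>S. P i" "pairwise R S"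
proof -
  have "\<exists>S. finite S \<and> card S = k \<and> (\<forall>i\<in>S. P i) \<and> pairwise R S"
  proof (induction k)
    case 0
    show ?case by (intro exI[of _ "{}"]) simp
  next
    case (Suc k)
    then obtain S where S: "finite S" "card S = k" "\<forall>i\<in>S. P i" "pairwise R S"
      by blast
    have "eventually (\<lambda>j. P j \<and> j \<notin> S \<and> (\<forall>i\<in>S. R i j)) F"
    proof (intro eventually_conj)
      show "eventually (\<lambda>j. j \<notin> S) F"
        by (rule filter_leD[OF \<open>F \<le> cofinite\<close>]) (simp add: eventually_cofinite S(1))
      show "eventually (\<lambda>j. \<forall>i\<in>S. R i j) F"
        using S(1,3) R by (simp add: eventually_ball_finite)
    qed (fact \<open>eventually P F\<close>)
    then obtain j where "P j" "j \<notin> S" "\<forall>i\<in>S. R i j"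
      using eventually_happens \<open>F \<noteq> bot\<close> by blast
    then show ?case
      using S sym by (intro exI[of _ "insert j S"]) (auto simp: pairwise_insert)
  qed
  then show ?thesis using that by blast
qed

lemma exists_infinite_pairs_by_extension:
  fixes I :: "'a set \<Rightarrow> 'b set \<Rightarrow> bool" and R :: "'a \<Rightarrow> 'b \<Rightarrow> bool"
  assumes "I {} {}"
    and extend: "\<And>B C. finite B \<Longrightarrow> finite C \<Longrightarrow> I B C \<Longrightarrow>
      \<exists>b c. b \<notin> B \<and> c \<notin> C \<and> I (insert b B) (insert c C)"
    and related: "\<And>B C. I B C \<Longrightarrow> \<forall>b\<in>B. \<forall>c\<in>C. R b c"
  shows "\<exists>B C. infinite B \<and> infinite C \<and> (\<forall>b\<in>B. \<forall>c\<in>C. R b c)"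
proof -
  define P where "P n BC \<longleftrightarrow> I (fst BC) (snd BC) \<and> finite (fst BC) \<and> finite (snd BC) \<and>
    card (fst BC) = n \<and> card (snd BC) = n" for n BC
  have "\<exists>BC'. P (Suc n) BC' \<and> fst BC \<subseteq> fst BC' \<and> snd BC \<subseteq> snd BC'" if PBC: "P n BC" for n BC
  proof -
    obtain b c where "b \<notin> fst BC" "c \<notin> snd BC" "I (insert b (fst BC)) (insert c (snd BC))"
      using extend[of "fst BC" "snd BC"] PBC unfolding P_def by blast
    with PBC show ?thesis
      unfolding P_def by (intro exI[of _ "(insert b (fst BC), insert c (snd BC))"]) auto
  qed
  moreover have "P 0 ({}, {})"
    using \<open>I {} {}\<close> by (simp add: P_def)
  ultimately obtain f where f: "\<And>n. P n (f n)"
    and grow: "\<And>n. fst (f n) \<subseteq> fst (f (Suc n)) \<and> snd (f n) \<subseteq> snd (f (Suc n))"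
    using dependent_nat_choice[of P "\<lambda>_ BC BC'. fst BC \<subseteq> fst BC' \<and> snd BC \<subseteq> snd BC'"] by metis
  define B where "B = (\<Union>n. fst (f n))"
  define C where "C = (\<Union>n. snd (f n))"
  have "infinite B"
  proof
    assume "finite B"
    then have "card (fst (f (Suc (card B)))) \<le> card B"
      by (rule card_mono) (auto simp: B_def)
    with f show False by (simp add: P_def)
  qed
  moreover have "infinite C"
  proof
    assume "finite C"
    then have "card (snd (f (Suc (card C)))) \<le> card C"
      by (rule card_mono) (auto simp: C_def)
    with f show False by (simp add: P_def)
  qed
  moreover have "R b c" if bc: "b \<in> B" "c \<in> C" for b c
  proof -
    obtain i j where "b \<in> fst (f i)" "c \<in> snd (f j)"
      using bc by (auto simp: B_def C_def)
    moreover have "fst (f i) \<subseteq> fst (f (max i j))" "snd (f j) \<subseteq> snd (f (max i j))"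
      using lift_Suc_mono_le[of "\<lambda>n. fst (f n)"] lift_Suc_mono_le[of "\<lambda>n. snd (f n)"] grow
      by simp_all
    ultimately show ?thesis
      using related[of "fst (f (max i j))" "snd (f (max i j))"] f[of "max i j"] by (auto simp: P_def)
  qed
  ultimately show ?thesis by blast
qed


lemma density_ratio_nonneg: "0 \<le> density_ratio \<Phi> X N"
  unfolding density_ratio_def by simp

lemma density_ratio_mono:
  assumes "X \<subseteq> Y"
  shows "density_ratio \<Phi> X N \<le> density_ratio \<Phi> Y N"
proof (cases "finite (\<Phi> N)")
  case True
  then have "card (X \<inter> \<Phi> N) \<le> card (Y \<inter> \<Phi> N)"
    using assms by (intro card_mono) auto
  then show ?thesis
    unfolding density_ratio_def by (simp add: divide_right_mono)
qed (simp add: density_ratio_def)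

lemma density_ratio_le_1: "density_ratio \<Phi> X N \<le> 1"
  using density_ratio_mono[of X UNIV \<Phi> N] by (simp add: density_ratio_def split: if_splits)

lemma density_ratio_sum_squared_le:
  assumes "finite S"
  shows "(\<Sum>i\<in>S. density_ratio \<Phi> (X i) N)\<^sup>2 \<le> (\<Sum>i\<in>S. \<Sum>j\<in>S. density_ratio \<Phi> (X i \<inter> X j) N)"
proof (cases "finite (\<Phi> N)")
  case fin: True
  define c where "c m = (\<Sum>i\<in>S. of_bool (m \<in> X i) :: real)" for m
  have card_eq: "real (card (Y \<inter> \<Phi> N)) = (\<Sum>m\<in>\<Phi> N. of_bool (m \<in> Y))" for Y
    using fin by (simp add: Int_commute)
  have "(\<Sum>i\<in>S. real (card (X i \<inter> \<Phi> N))) = (\<Sum>m\<in>\<Phi> N. c m)"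
    unfolding card_eq c_def by (rule sum.swap)
  moreover have "(\<Sum>i\<in>S. \<Sum>j\<in>S. real (card (X i \<inter> X j \<inter> \<Phi> N))) = (\<Sum>m\<in>\<Phi> N. (c m)\<^sup>2)"
    unfolding card_eq c_def power2_eq_square sum_product
    by (simp add: of_bool_conj sum.swap[of _ _ "\<Phi> N"])
  moreover have "(\<Sum>m\<in>\<Phi> N. c m)\<^sup>2 / (real (card (\<Phi> N)))\<^sup>2 \<le> (\<Sum>m\<in>\<Phi> N. (c m)\<^sup>2) / real (card (\<Phi> N))"
    using sum_squared_le_sum_of_squares[of c "\<Phi> N"]
    by (cases "card (\<Phi> N) = 0") (simp_all add: divide_simps power2_eq_square)
  ultimately show ?thesis
    by (simp add: density_ratio_def power_divide flip: sum_divide_distrib)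
qed (simp add: density_ratio_def)

lemma folner_inverse_card_tendsto_0:
  assumes "folner \<Phi>"
  shows "(\<lambda>N. 1 / real (card (\<Phi> N))) \<longlonglongrightarrow> 0"
proof (rule tendsto_sandwich[OF _ _ tendsto_const])
  define S where "S N = ((+) 1 ` \<Phi> N - \<Phi> N) \<union> (\<Phi> N - (+) 1 ` \<Phi> N)" for N
  show "(\<lambda>N. real (card (S N)) / real (card (\<Phi> N))) \<longlonglongrightarrow> 0"
    using assms unfolding folner_def S_def by blast
  have "card (S N) \<ge> 1" for N
  proof -
    have fin: "finite (\<Phi> N)" and ne: "\<Phi> N \<noteq> {}"
      using assms unfolding folner_def by auto
    \<comment> \<open>the successor of the largest element of \<open>\<Phi> N\<close> lies in the symmetric difference\<close>
    then have "1 + Max (\<Phi> N) \<in> S N"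
      unfolding S_def by (auto dest: Max_ge)
    moreover have "finite (S N)"
      using fin unfolding S_def by auto
    ultimately show ?thesis
      by (metis card_0_eq empty_iff less_one not_le)
  qed
  then show "\<forall>\<^sub>F N in sequentially. 1 / real (card (\<Phi> N)) \<le> real (card (S N)) / real (card (\<Phi> N))"
    by (simp add: divide_right_mono)
qed simp

lemma folner_density_ratio_finite_tendsto_0:
  assumes "folner \<Phi>" and "finite X"
  shows "density_ratio \<Phi> X \<longlonglongrightarrow> 0"
proof (rule tendsto_sandwich[OF _ _ tendsto_const])
  show "(\<lambda>N. real (card X) * (1 / real (card (\<Phi> N)))) \<longlonglongrightarrow> 0"
    using tendsto_mult_right_zero[OF folner_inverse_card_tendsto_0[OF assms(1)]] .
  have "card (X \<inter> \<Phi> N) \<le> card X" for N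
    using assms(2) by (intro card_mono) auto
  then show "\<forall>\<^sub>F N in sequentially. density_ratio \<Phi> X N \<le> real (card X) * (1 / real (card (\<Phi> N)))"
    by (simp add: density_ratio_def divide_right_mono)
qed (simp add: density_ratio_nonneg)

definition ultradensity :: "(nat \<Rightarrow> nat set) \<Rightarrow> nat filter \<Rightarrow> nat set \<Rightarrow> real" where
  "ultradensity \<Phi> p X = Lim p (density_ratio \<Phi> X)"

definition return_density :: "(nat \<Rightarrow> nat set) \<Rightarrow> nat filter \<Rightarrow> nat set \<Rightarrow> nat set \<Rightarrow> real" where
  "return_density \<Phi> p A X = Lim p (\<lambda>n. ultradensity \<Phi> p (X \<inter> shift_set A n))"

context
  fixes p :: "nat filter"
  assumes uf: "ultrafilter p"
begin

lemma ultradensity_tendsto: "(density_ratio \<Phi> X \<longlongrightarrow> ultradensity \<Phi> p X) p"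
  unfolding ultradensity_def
  by (rule ultrafilter_tendsto_Lim[OF uf compact_Icc[of 0 1]])
    (simp add: density_ratio_nonneg density_ratio_le_1)

lemma ultradensity_nonneg: "0 \<le> ultradensity \<Phi> p X"
  by (rule tendsto_lowerbound[OF ultradensity_tendsto])
    (simp_all add: density_ratio_nonneg ultrafilter_ne_bot[OF uf])

lemma ultradensity_le_1: "ultradensity \<Phi> p X \<le> 1"
  by (rule tendsto_upperbound[OF ultradensity_tendsto])
    (simp_all add: density_ratio_le_1 ultrafilter_ne_bot[OF uf])

lemma ultradensity_mono:
  assumes "X \<subseteq> Y"
  shows "ultradensity \<Phi> p X \<le> ultradensity \<Phi> p Y"
  by (rule tendsto_le[OF ultrafilter_ne_bot[OF uf] ultradensity_tendsto ultradensity_tendsto])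
    (simp add: density_ratio_mono[OF assms])

lemma ultradensity_eq_lim:
  assumes "nonprincipal p" and "density_ratio \<Phi> X \<longlonglongrightarrow> d"
  shows "ultradensity \<Phi> p X = d"
proof -
  have "p \<le> sequentially"
    using nonprincipal_ultrafilter_le_cofinite[OF uf assms(1)] by (simp add: cofinite_eq_sequentially)
  with assms(2) have "(density_ratio \<Phi> X \<longlongrightarrow> d) p"
    by (rule tendsto_mono[rotated])
  then show ?thesis
    unfolding ultradensity_def by (rule tendsto_Lim[OF ultrafilter_ne_bot[OF uf]])
qed

lemma ultradensity_eq_density:
  assumes "nonprincipal p" and "density_exists \<Phi> X"
  shows "ultradensity \<Phi> p X = density \<Phi> X"
  using assms by (intro ultradensity_eq_lim)
    (simp_all add: density_exists_def density_def convergent_LIMSEQ_iff)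

lemma ultradensity_finite:
  assumes "nonprincipal p" and "folner \<Phi>" and "finite X"
  shows "ultradensity \<Phi> p X = 0"
  using assms by (intro ultradensity_eq_lim folner_density_ratio_finite_tendsto_0)

lemma ultradensity_sum_squared_le:
  assumes "finite S"
  shows "(\<Sum>i\<in>S. ultradensity \<Phi> p (X i))\<^sup>2 \<le> (\<Sum>i\<in>S. \<Sum>j\<in>S. ultradensity \<Phi> p (X i \<inter> X j))"
proof (rule tendsto_le[OF ultrafilter_ne_bot[OF uf]])
  show "((\<lambda>N. \<Sum>i\<in>S. \<Sum>j\<in>S. density_ratio \<Phi> (X i \<inter> X j) N)
      \<longlongrightarrow> (\<Sum>i\<in>S. \<Sum>j\<in>S. ultradensity \<Phi> p (X i \<inter> X j))) p"
    by (intro tendsto_sum ultradensity_tendsto)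
  show "((\<lambda>N. (\<Sum>i\<in>S. density_ratio \<Phi> (X i) N)\<^sup>2) \<longlongrightarrow> (\<Sum>i\<in>S. ultradensity \<Phi> p (X i))\<^sup>2) p"
    by (intro tendsto_power tendsto_sum ultradensity_tendsto)
qed (intro always_eventually allI density_ratio_sum_squared_le assms)

lemma ultradensity_almost_disjoint_bound:
  fixes \<beta> \<epsilon> :: real
  assumes "finite S" and "0 \<le> \<beta>" and "0 \<le> \<epsilon>"
    and large: "\<forall>i\<in>S. \<beta> \<le> ultradensity \<Phi> p (X i)"
    and almost_disjoint: "pairwise (\<lambda>i j. ultradensity \<Phi> p (X i \<inter> X j) \<le> \<epsilon>) S"
  shows "(real (card S) * \<beta>)\<^sup>2 \<le> real (card S) * (1 + real (card S) * \<epsilon>)"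
proof -
  have row: "(\<Sum>j\<in>S. ultradensity \<Phi> p (X i \<inter> X j)) \<le> 1 + real (card S) * \<epsilon>" if "i \<in> S" for i
  proof -
    have "(\<Sum>j\<in>S. ultradensity \<Phi> p (X i \<inter> X j)) \<le> (\<Sum>j\<in>S. of_bool (j = i) + \<epsilon>)"
    proof (rule sum_mono)
      fix j assume "j \<in> S"
      then show "ultradensity \<Phi> p (X i \<inter> X j) \<le> of_bool (j = i) + \<epsilon>"
        using that almost_disjoint \<open>0 \<le> \<epsilon>\<close> ultradensity_le_1[of \<Phi> "X i \<inter> X j"]
        by (cases "j = i") (auto simp: pairwise_def)
    qed
    also have "\<dots> = 1 + real (card S) * \<epsilon>"
      using \<open>finite S\<close> that by (simp add: sum.distrib)
    finally show ?thesis .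
  qed
  have "(real (card S) * \<beta>)\<^sup>2 \<le> (\<Sum>i\<in>S. ultradensity \<Phi> p (X i))\<^sup>2"
    using sum_mono[of S "\<lambda>_. \<beta>"] large \<open>0 \<le> \<beta>\<close> by (intro power_mono) auto
  also have "\<dots> \<le> (\<Sum>i\<in>S. \<Sum>j\<in>S. ultradensity \<Phi> p (X i \<inter> X j))"
    by (rule ultradensity_sum_squared_le[OF \<open>finite S\<close>])
  also have "\<dots> \<le> (\<Sum>i\<in>S. 1 + real (card S) * \<epsilon>)"
    by (rule sum_mono) (rule row)
  finally show ?thesis by simp
qed

lemma return_density_tendsto:
  "((\<lambda>n. ultradensity \<Phi> p (X \<inter> shift_set A n)) \<longlongrightarrow> return_density \<Phi> p A X) p"
  unfolding return_density_def
  by (rule ultrafilter_tendsto_Lim[OF uf compact_Icc[of 0 1]])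
    (simp add: ultradensity_nonneg ultradensity_le_1)

lemma return_density_le_ultradensity: "return_density \<Phi> p A X \<le> ultradensity \<Phi> p X"
  by (rule tendsto_upperbound[OF return_density_tendsto])
    (simp_all add: ultradensity_mono ultrafilter_ne_bot[OF uf])

lemma return_density_Int_shift_pos:
  assumes np: "nonprincipal p" and pos: "0 < return_density \<Phi> p A D"
  shows "eventually (\<lambda>c. 0 < return_density \<Phi> p A (D \<inter> shift_set A c)) p"
proof (rule ccontr)
  define \<alpha> where "\<alpha> = return_density \<Phi> p A D"
  define \<epsilon> where "\<epsilon> = \<alpha>\<^sup>2 / 8"
  define X where "X c = D \<inter> shift_set A c" for c
  have "\<alpha> > 0" "\<epsilon> > 0"
    using pos by (simp_all add: \<alpha>_def \<epsilon>_def)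
  define P where "P c \<longleftrightarrow> \<alpha> / 2 \<le> ultradensity \<Phi> p (X c) \<and> return_density \<Phi> p A (X c) \<le> 0" for c
  assume "\<not> ?thesis"
  then have "eventually (\<lambda>c. return_density \<Phi> p A (X c) \<le> 0) p"
    using ultrafilter_eventually_or_not[OF uf, of "\<lambda>c. 0 < return_density \<Phi> p A (X c)"]
    by (simp add: X_def not_less)
  moreover have "eventually (\<lambda>c. \<alpha> / 2 < ultradensity \<Phi> p (X c)) p"
    using order_tendstoD(1)[OF return_density_tendsto, of "\<alpha> / 2" \<Phi> A D] \<open>\<alpha> > 0\<close>
    by (simp add: \<alpha>_def X_def)
  ultimately have "eventually P p"
    unfolding P_def by eventually_elim simp
  have near: "eventually (\<lambda>j. ultradensity \<Phi> p (X i \<inter> X j) \<le> \<epsilon>) p" if "P i" for i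
  proof -
    have "X i \<inter> shift_set A j = X i \<inter> X j" for j
      by (auto simp: X_def)
    then have "((\<lambda>j. ultradensity \<Phi> p (X i \<inter> X j)) \<longlongrightarrow> return_density \<Phi> p A (X i)) p"
      using return_density_tendsto[of \<Phi> "X i" A] by simp
    moreover have "return_density \<Phi> p A (X i) < \<epsilon>"
      using that \<open>\<epsilon> > 0\<close> by (simp add: P_def)
    ultimately have "eventually (\<lambda>j. ultradensity \<Phi> p (X i \<inter> X j) < \<epsilon>) p"
      by (rule order_tendstoD(2))
    then show ?thesis
      by (rule eventually_mono) simp
  qed
  have sym: "ultradensity \<Phi> p (X j \<inter> X i) \<le> \<epsilon>" if "ultradensity \<Phi> p (X i \<inter> X j) \<le> \<epsilon>" for i j
    using that by (simp add: Int_commute)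
  obtain k :: nat where "8 / \<alpha>\<^sup>2 < k"
    using reals_Archimedean2 by blast
  obtain S where "finite S" "card S = k" "\<forall>i\<in>S. P i"
    and "pairwise (\<lambda>i j. ultradensity \<Phi> p (X i \<inter> X j) \<le> \<epsilon>) S"
    using filter_obtain_pairwise_family[OF ultrafilter_ne_bot[OF uf] nonprincipal_ultrafilter_le_cofinite[OF uf np]
        \<open>eventually P p\<close> near sym] .
  then have "(real k * (\<alpha> / 2))\<^sup>2 \<le> real k * (1 + real k * \<epsilon>)"
    using ultradensity_almost_disjoint_bound[of S "\<alpha> / 2" \<epsilon> \<Phi> X] \<open>\<alpha> > 0\<close> \<open>\<epsilon> > 0\<close>
    by (simp add: P_def)
  then have "real k * (real k * \<alpha>\<^sup>2) / 4 \<le> real k * (1 + real k * \<alpha>\<^sup>2 / 8)"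
    by (simp add: \<epsilon>_def power_mult_distrib power_divide power2_eq_square mult_ac)
  then have "real k * (real k * \<alpha>\<^sup>2) \<le> real k * 8"
    by (simp add: algebra_simps)
  moreover have "8 < real k * \<alpha>\<^sup>2"
    using \<open>8 / \<alpha>\<^sup>2 < k\<close> \<open>\<alpha> > 0\<close> by (simp add: field_simps)
  ultimately show False
    by (cases "k = 0") (simp_all add: mult_le_cancel_left)
qed

end

text \<open>
  The invariant of the construction: \<open>A - p\<close> intersected with all \<open>A - c\<close>, \<open>c \<in> C\<close>, is the pool
  from which further elements of \<open>B\<close> are drawn.
\<close>
definition admissible :: "(nat \<Rightarrow> nat set) \<Rightarrow> nat filter \<Rightarrow> nat set \<Rightarrow> nat set \<Rightarrow> nat set \<Rightarrow> bool" where
  "admissible \<Phi> p A B C \<longleftrightarrow> B \<subseteq> shift_uf A p \<and> (\<forall>b\<in>B. \<forall>c\<in>C. b + c \<in> A) \<and>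
     0 < return_density \<Phi> p A (shift_uf A p \<inter> (\<Inter>c\<in>C. shift_set A c))"

lemma admissible_empty:
  assumes uf: "ultrafilter p" and np: "nonprincipal p"
    and "\<forall>n. density_exists \<Phi> (shift_set A n \<inter> shift_uf A p)"
    and "\<exists>x>0. ((\<lambda>n. density \<Phi> (shift_set A n \<inter> shift_uf A p)) \<longlongrightarrow> x) p"
  shows "admissible \<Phi> p A {} {}"
proof -
  obtain x where "x > 0" and x: "((\<lambda>n. density \<Phi> (shift_set A n \<inter> shift_uf A p)) \<longlongrightarrow> x) p"
    using assms(4) by blast
  have "ultradensity \<Phi> p (shift_uf A p \<inter> shift_set A n) = density \<Phi> (shift_set A n \<inter> shift_uf A p)" for n
    using ultradensity_eq_density[OF uf np] assms(3) by (simp add: Int_commute)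
  then have "((\<lambda>n. density \<Phi> (shift_set A n \<inter> shift_uf A p)) \<longlongrightarrow> return_density \<Phi> p A (shift_uf A p)) p"
    using return_density_tendsto[OF uf, of \<Phi> "shift_uf A p" A] by simp
  with x have "return_density \<Phi> p A (shift_uf A p) = x"
    by (rule tendsto_unique[OF ultrafilter_ne_bot[OF uf], rotated])
  with \<open>x > 0\<close> show ?thesis
    by (simp add: admissible_def)
qed

lemma admissible_insert:
  assumes fol: "folner \<Phi>" and uf: "ultrafilter p" and np: "nonprincipal p"
    and "finite B" and "finite C" and adm: "admissible \<Phi> p A B C"
  shows "\<exists>b c. b \<notin> B \<and> c \<notin> C \<and> admissible \<Phi> p A (insert b B) (insert c C)"
proof -
  define D where "D = shift_uf A p \<inter> (\<Inter>c\<in>C. shift_set A c)"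
  have "eventually (\<lambda>c. 0 < return_density \<Phi> p A (D \<inter> shift_set A c) \<and> c \<notin> C \<and> (\<forall>b\<in>B. b + c \<in> A)) p"
  proof (intro eventually_conj)
    show "eventually (\<lambda>c. 0 < return_density \<Phi> p A (D \<inter> shift_set A c)) p"
      using adm by (intro return_density_Int_shift_pos[OF uf np]) (simp add: admissible_def D_def)
    show "eventually (\<lambda>c. c \<notin> C) p"
      by (rule filter_leD[OF nonprincipal_ultrafilter_le_cofinite[OF uf np]])
        (simp add: eventually_cofinite \<open>finite C\<close>)
    have "eventually (\<lambda>c. b + c \<in> A) p" if "b \<in> B" for b
      using adm that by (auto simp: admissible_def shift_uf_def shift_set_def add.commute)
    then show "eventually (\<lambda>c. \<forall>b\<in>B. b + c \<in> A) p"
      using \<open>finite B\<close> by (simp add: eventually_ball_finite)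
  qed
  then obtain c where c: "0 < return_density \<Phi> p A (D \<inter> shift_set A c)" "c \<notin> C" "\<forall>b\<in>B. b + c \<in> A"
    using eventually_happens ultrafilter_ne_bot[OF uf] by blast
  have "0 < ultradensity \<Phi> p (D \<inter> shift_set A c)"
    using c(1) return_density_le_ultradensity[OF uf] by (rule less_le_trans)
  then have "infinite (D \<inter> shift_set A c)"
    using ultradensity_finite[OF uf np fol] by force
  then obtain b where "b \<in> D \<inter> shift_set A c" "b \<notin> B"
    using infinite_imp_nonempty[OF Diff_infinite_finite[OF \<open>finite B\<close>]] by blast
  moreover have "D \<inter> shift_set A c = shift_uf A p \<inter> (\<Inter>c'\<in>insert c C. shift_set A c')"
    by (auto simp: D_def)
  ultimately have "admissible \<Phi> p A (insert b B) (insert c C)"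
    using adm c by (auto simp: admissible_def D_def shift_set_def add.commute)
  with \<open>b \<notin> B\<close> \<open>c \<notin> C\<close> show ?thesis by blast
qed

theorem theorem2p2:
  fixes A :: "nat set"
  assumes "folner \<Phi>"
    and "ultrafilter p" and "nonprincipal p"
    and "\<forall>n. density_exists \<Phi> (shift_set A n \<inter> shift_uf A p)"
    and "\<exists>x>0. ((\<lambda>n. density \<Phi> (shift_set A n \<inter> shift_uf A p)) \<longlongrightarrow> x) p"
  shows "\<exists>B C :: nat set. infinite B \<and> infinite C \<and> {b + c | b c. b \<in> B \<and> c \<in> C} \<subseteq> A"
proof -
  have "\<exists>B C :: nat set. infinite B \<and> infinite C \<and> (\<forall>b\<in>B. \<forall>c\<in>C. b + c \<in> A)"
  proof (rule exists_infinite_pairs_by_extension[of "admissible \<Phi> p A"])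
    show "admissible \<Phi> p A {} {}"
      using admissible_empty assms(2-5) .
    show "\<exists>b c. b \<notin> B \<and> c \<notin> C \<and> admissible \<Phi> p A (insert b B) (insert c C)"
      if "finite B" "finite C" "admissible \<Phi> p A B C" for B C
      using admissible_insert assms(1-3) that .
  qed (simp add: admissible_def)
  then show ?thesis by blast
qed

end
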